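(* Let $X$ be a compact locale with frame presentation $\mathcal{O}X=\langle G\mid R\rangle$ and quotient frame homomorphism $\overline{q}\colon\mathcal{O}(\Sigma^G)\to\mathcal{O}X$. Let $m\in\mathcal{O}(\Sigma^G)$ be a machine, $m=\bigvee_{i\in I}\bigwedge_{j\in J_i}g_j$ with each $J_i$ a finite set of generators. Then $\overline{q}(m)=1$ in $\mathcal{O}X$ (i.e. $m$ halts on all of $X$) if and only if there exists a finite set $S$ of finite subsets of $G$ such that $\bigvee_{F\in S}\bigwedge_{g\in F}g=1$ in $\mathcal{O}X$ and $m\in{\boxtimes}F$ for every $F\in S$. (Equivalently, the procedure which in parallel searches over all finite sets $S$ of finite subsets of $G$, and for each $S$ with $\bigvee_{F\in S}\bigwedge F=1$ in $\mathcal{O}X$ tests $m\in{\boxtimes}F$ for all $F\in S$ and halts if all tests succeed, halts on $m$ exactly when $m$ covers $X$.)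
   Context: Frames are complete lattices with finite meets distributing over arbitrary joins; a locale $X$ is a frame $\mathcal{O}X$. A locale is compact if whenever $\bigvee_{i\in I}u_i=1$ there is a finite $F\subseteq I$ with $\bigvee_{i\in F}u_i=1$. For a set $G$, $\mathcal{O}(\Sigma^G)$ is the free frame on $G$; its elements ("machines") are formal joins $\bigvee_{i\in I}\bigwedge_{j\in J_i}g_j$ of finite formal meets of generators. A presentation $\mathcal{O}X=\langle G\mid R\rangle$ means $\mathcal{O}X$ is the quotient of the free frame on $G$ by the frame congruence generated by $R$, with quotient map $\overline{q}$. For $U\subseteq G$, ${\boxtimes}U$ is the Scott-open set of machines $m$ such that $m$ has a branch all of whose generators lie in $U$; i.e. $m\in{\boxtimes}U$ iff there is a finite $J\subseteq U$ with $\bigwedge_{g\in J}g\le m$ in $\mathcal{O}(\Sigma^G)$. *)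

theory Defs
  imports Main
begin

text \<open>A frame: a complete lattice in which binary meets distribute over arbitrary joins.
  A locale X is represented by its frame of opens, a type 'a of class complete_lattice
  satisfying this law.\<close>
definition is_frame :: "'a::complete_lattice itself \<Rightarrow> bool" where
  "is_frame _ \<longleftrightarrow> (\<forall>(a::'a) U. inf a (Sup U) = Sup ((\<lambda>u. inf a u) ` U))"

definition compact_frame :: "'a::complete_lattice itself \<Rightarrow> bool" where
  "compact_frame _ \<longleftrightarrow>
     (\<forall>U::'a set. Sup U = top \<longrightarrow> (\<exists>F\<subseteq>U. finite F \<and> Sup F = top))"

text \<open>Concrete model: a machine (formal join of finite formal meets of generators) is
  represented by the upward-closed family of finite sets of generators F whose formal meet
  lies below it. Order is inclusion, joins are unions, finite meets are intersections.\<close>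
definition machines :: "'g set set set" where
  "machines = {M. (\<forall>F\<in>M. finite F) \<and>
                  (\<forall>F F'. F \<in> M \<longrightarrow> F \<subseteq> F' \<longrightarrow> finite F' \<longrightarrow> F' \<in> M)}"

definition fmeet :: "'g set \<Rightarrow> 'g set set" where
  "fmeet J = {F. finite F \<and> J \<subseteq> F}"

definition gen :: "'g \<Rightarrow> 'g set set" where
  "gen g = fmeet {g}"

definition mtop :: "'g set set" where
  "mtop = {F. finite F}"

definition boxtimes :: "'g set \<Rightarrow> 'g set set set" where
  "boxtimes U = {m \<in> machines. \<exists>J. finite J \<and> J \<subseteq> U \<and> fmeet J \<subseteq> m}"

definition free_frame_hom :: "('g set set \<Rightarrow> 'a::complete_lattice) \<Rightarrow> bool" where
  "free_frame_hom q \<longleftrightarrow>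
     q mtop = top \<and>
     (\<forall>a\<in>machines. \<forall>b\<in>machines. q (a \<inter> b) = inf (q a) (q b)) \<and>
     (\<forall>A\<subseteq>machines. q (\<Union>A) = Sup (q ` A))"

definition frame_congruence :: "('g set set \<times> 'g set set) set \<Rightarrow> bool" where
  "frame_congruence E \<longleftrightarrow>
     E \<subseteq> machines \<times> machines \<and>
     (\<forall>a\<in>machines. (a, a) \<in> E) \<and> sym E \<and> trans E \<and>
     (\<forall>a b c d. (a, b) \<in> E \<longrightarrow> (c, d) \<in> E \<longrightarrow> (a \<inter> c, b \<inter> d) \<in> E) \<and>
     (\<forall>P\<subseteq>E. (\<Union>(fst ` P), \<Union>(snd ` P)) \<in> E)"

definition congruence_generated :: "('g set set \<times> 'g set set) set \<Rightarrow> ('g set set \<times> 'g set set) set" where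
  "congruence_generated R = \<Inter>{E. frame_congruence E \<and> R \<subseteq> E}"

definition is_presentation ::
  "('g set set \<times> 'g set set) set \<Rightarrow> ('g set set \<Rightarrow> 'a::complete_lattice) \<Rightarrow> bool" where
  "is_presentation R q \<longleftrightarrow>
     R \<subseteq> machines \<times> machines \<and>
     free_frame_hom q \<and>
     q ` machines = UNIV \<and>
     {(a, b). a \<in> machines \<and> b \<in> machines \<and> q a = q b} = congruence_generated R"

end

theory Submission
  imports Defs
begin

text \<open>A frame homomorphism out of the free frame sends a machine \<open>m\<close> to the join of its
  branches, the meets of the finite sets \<open>F \<in> m\<close>. If this join is top, compactness picks
  finitely many branches whose join is already top, and for finite \<open>F\<close> being a branch of
  \<open>m\<close> is the same as \<open>m \<in> boxtimes F\<close>. Conversely such a finite family consists of branches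
  of \<open>m\<close>, so its join lies below \<open>q m\<close>.\<close>

lemma fmeet_in_machines: "finite J \<Longrightarrow> fmeet J \<in> machines"
  unfolding fmeet_def machines_def by auto

lemma fmeet_subset_machine: "m \<in> machines \<Longrightarrow> F \<in> m \<Longrightarrow> fmeet F \<subseteq> m"
  unfolding machines_def fmeet_def by auto

lemma machine_eq_Union_fmeet:
  assumes "m \<in> machines"
  shows "m = (\<Union>F\<in>m. fmeet F)"
proof
  show "m \<subseteq> (\<Union>F\<in>m. fmeet F)"
    using assms unfolding machines_def fmeet_def by blast
  show "(\<Union>F\<in>m. fmeet F) \<subseteq> m"
    using fmeet_subset_machine[OF assms] by blast
qed

lemma boxtimes_iff_mem:
  assumes m: "m \<in> machines" and "finite F"
  shows "m \<in> boxtimes F \<longleftrightarrow> F \<in> m"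
proof
  assume "m \<in> boxtimes F"
  then obtain J where "J \<subseteq> F" "fmeet J \<subseteq> m"
    unfolding boxtimes_def by auto
  then show "F \<in> m" using \<open>finite F\<close> unfolding fmeet_def by blast
next
  assume "F \<in> m"
  then show "m \<in> boxtimes F"
    using m \<open>finite F\<close> fmeet_subset_machine unfolding boxtimes_def by blast
qed

lemma free_frame_hom_fmeet:
  fixes q :: "'g set set \<Rightarrow> 'a::complete_lattice"
  assumes h: "free_frame_hom q" and "finite F"
  shows "q (fmeet F) = (INF g\<in>F. q (gen g))"
  using \<open>finite F\<close>
proof (induction F rule: finite_induct)
  case empty
  have "fmeet {} = (mtop :: 'g set set)" unfolding fmeet_def mtop_def by auto
  then show ?case using h unfolding free_frame_hom_def by simp
next
  case (insert x F)
  have "fmeet (insert x F) = gen x \<inter> fmeet F"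
    unfolding fmeet_def gen_def by auto
  moreover have "gen x \<in> machines" "fmeet F \<in> machines"
    using insert.hyps by (simp_all add: gen_def fmeet_in_machines)
  ultimately show ?case
    using h insert.IH unfolding free_frame_hom_def by simp
qed

lemma free_frame_hom_machine_eq_SUP:
  fixes q :: "'g set set \<Rightarrow> 'a::complete_lattice"
  assumes h: "free_frame_hom q" and m: "m \<in> machines"
  shows "q m = (SUP F\<in>m. INF g\<in>F. q (gen g))"
proof -
  have fin: "\<And>F. F \<in> m \<Longrightarrow> finite F" using m unfolding machines_def by blast
  have "fmeet ` m \<subseteq> machines" using fin fmeet_in_machines by blast
  then have "q (\<Union>F\<in>m. fmeet F) = (SUP F\<in>m. q (fmeet F))"
    using h unfolding free_frame_hom_def by (simp add: image_image)
  also have "\<dots> = (SUP F\<in>m. INF g\<in>F. q (gen g))"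
    using fin free_frame_hom_fmeet[OF h] by simp
  finally show ?thesis using machine_eq_Union_fmeet[OF m] by simp
qed

lemma compact_frame_SUP_eq_top:
  fixes f :: "'i \<Rightarrow> 'a::complete_lattice"
  assumes "compact_frame TYPE('a)" and "(SUP i\<in>I. f i) = top"
  obtains J where "J \<subseteq> I" "finite J" "(SUP i\<in>J. f i) = top"
proof -
  obtain U where "U \<subseteq> f ` I" "finite U" "Sup U = top"
    using assms unfolding compact_frame_def by blast
  then obtain J where "J \<subseteq> I" "finite J" "U = f ` J"
    by (meson finite_subset_image)
  then show ?thesis using that \<open>Sup U = top\<close> by blast
qed

theorem theorem4p1:
  fixes R :: "('g set set \<times> 'g set set) set"
    and q :: "'g set set \<Rightarrow> 'a::complete_lattice"
    and m :: "'g set set"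
  assumes "is_frame TYPE('a)"
    and "compact_frame TYPE('a)"
    and "is_presentation R q"
    and "m \<in> machines"
  shows "q m = top \<longleftrightarrow>
    (\<exists>S :: 'g set set. finite S \<and> (\<forall>F\<in>S. finite F) \<and>
        (SUP F\<in>S. INF g\<in>F. q (gen g)) = top \<and>
        (\<forall>F\<in>S. m \<in> boxtimes F))"
proof -
  have q_m: "q m = (SUP F\<in>m. INF g\<in>F. q (gen g))"
    using assms(3,4) free_frame_hom_machine_eq_SUP unfolding is_presentation_def by blast
  have fin: "\<And>F. F \<in> m \<Longrightarrow> finite F" using assms(4) unfolding machines_def by blast
  show ?thesis
  proof
    assume "q m = top"
    then obtain S where "S \<subseteq> m" "finite S" "(SUP F\<in>S. INF g\<in>F. q (gen g)) = top"
      using compact_frame_SUP_eq_top[OF assms(2)] q_m by metis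
    then show "\<exists>S. finite S \<and> (\<forall>F\<in>S. finite F) \<and>
        (SUP F\<in>S. INF g\<in>F. q (gen g)) = top \<and> (\<forall>F\<in>S. m \<in> boxtimes F)"
      using fin boxtimes_iff_mem[OF assms(4)] by blast
  next
    assume "\<exists>S. finite S \<and> (\<forall>F\<in>S. finite F) \<and>
        (SUP F\<in>S. INF g\<in>F. q (gen g)) = top \<and> (\<forall>F\<in>S. m \<in> boxtimes F)"
    then obtain S where "S \<subseteq> m" "(SUP F\<in>S. INF g\<in>F. q (gen g)) = top"
      using boxtimes_iff_mem[OF assms(4)] by blast
    then have "top \<le> q m" unfolding q_m by (metis SUP_subset_mono order_refl)
    then show "q m = top" by (simp add: top_le)
  qed
qed

end
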